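(* For $m\ge 2$: $\mathrm{Spec}(\Gamma_{U_{6m}})=\{[0]^{2m-2},[m]^1,[-m]^1\}$, $\mathrm{L\text{-}Spec}(\Gamma_{U_{6m}})=\mathrm{Q\text{-}Spec}(\Gamma_{U_{6m}})=\{[0]^1,[m]^{2m-2},[2m]^1\}$, and $E(\Gamma_{U_{6m}})=LE(\Gamma_{U_{6m}})=SE(\Gamma_{U_{6m}})=2m$.
   Context: $U_{6m}=\langle x,y\mid x^{2m}=y^3=1,\ x^{-1}yx=y^{-1}\rangle$. For a finite non-abelian group $G$ with center $Z(G)$, the NCCC-graph $\Gamma_G$ has vertex set $\{x^G: x\in G\setminus Z(G)\}$ ($x^G$ the conjugacy class of $x$), distinct vertices $x^G,y^G$ adjacent iff $x'y'\neq y'x'$ for all $x'\in x^G,y'\in y^G$. For a simple graph with adjacency matrix $A$, degree matrix $D$, $L=D-A$, $Q=D+A$; Spec, L-Spec, Q-Spec are eigenvalue multisets of $A,L,Q$, $[\lambda]^k$ meaning eigenvalue $\lambda$ of multiplicity $k$. $E=\sum_{\lambda\in\mathrm{Spec}}|\lambda|$; with $\Delta=2|E(\mathcal G)|/|V(\mathcal G)|$, $LE=\sum_{\beta\in\mathrm{L\text{-}Spec}}|\beta-\Delta|$, $SE=\sum_{\gamma\in\mathrm{Q\text{-}Spec}}|\gamma-\Delta|$. *)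

theory Defs
  imports "HOL-Algebra.Group" "Jordan_Normal_Form.Char_Poly"
begin

text \<open>Concrete model of U_{6m} = < x, y | x^(2m) = y^3 = 1, x^-1 y x = y^-1 >:
  the element x^a y^b (0 <= a < 2m, 0 <= b < 3) is the pair (a, b).
  Since y^b x^c = x^c y^(b (-1)^c), the product is
  (x^a y^b)(x^c y^d) = x^(a+c) y^(b (-1)^c + d).\<close>

definition U6m :: "nat \<Rightarrow> (nat \<times> nat) monoid" where
  "U6m m = \<lparr> carrier = {0..<2*m} \<times> {0..<3},
     mult = (\<lambda>(a, b) (c, d).
               ((a + c) mod (2*m), ((if even c then b else (3 - b) mod 3) + d) mod 3)),
     one = (0, 0) \<rparr>"

definition group_center :: "('a, 'b) monoid_scheme \<Rightarrow> 'a set" where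
  "group_center G = {z \<in> carrier G. \<forall>g \<in> carrier G. z \<otimes>\<^bsub>G\<^esub> g = g \<otimes>\<^bsub>G\<^esub> z}"

definition conj_class :: "('a, 'b) monoid_scheme \<Rightarrow> 'a \<Rightarrow> 'a set" where
  "conj_class G x = {g \<otimes>\<^bsub>G\<^esub> x \<otimes>\<^bsub>G\<^esub> inv\<^bsub>G\<^esub> g | g. g \<in> carrier G}"

definition nccc_vertices :: "('a, 'b) monoid_scheme \<Rightarrow> 'a set set" where
  "nccc_vertices G = conj_class G ` (carrier G - group_center G)"

definition nccc_adj :: "('a, 'b) monoid_scheme \<Rightarrow> 'a set \<Rightarrow> 'a set \<Rightarrow> bool" where
  "nccc_adj G C D \<longleftrightarrow> C \<noteq> D \<and>
     (\<forall>x \<in> C. \<forall>y \<in> D. x \<otimes>\<^bsub>G\<^esub> y \<noteq> y \<otimes>\<^bsub>G\<^esub> x)"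

text \<open>A fixed enumeration of the (finite) vertex set by 0..card V - 1.
  The spectra below do not depend on the choice of enumeration.\<close>
definition vertex_enum :: "'v set \<Rightarrow> nat \<Rightarrow> 'v" where
  "vertex_enum V = (SOME f. bij_betw f {0..<card V} V)"

definition graph_degree :: "'v set \<Rightarrow> ('v \<Rightarrow> 'v \<Rightarrow> bool) \<Rightarrow> 'v \<Rightarrow> nat" where
  "graph_degree V Adj v = card {w \<in> V. Adj v w}"

definition adj_matrix :: "'v set \<Rightarrow> ('v \<Rightarrow> 'v \<Rightarrow> bool) \<Rightarrow> complex mat" where
  "adj_matrix V Adj = mat (card V) (card V)
     (\<lambda>(i, j). if Adj (vertex_enum V i) (vertex_enum V j) then 1 else 0)"

definition degree_matrix :: "'v set \<Rightarrow> ('v \<Rightarrow> 'v \<Rightarrow> bool) \<Rightarrow> complex mat" where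
  "degree_matrix V Adj = mat (card V) (card V)
     (\<lambda>(i, j). if i = j then of_nat (graph_degree V Adj (vertex_enum V i)) else 0)"

definition laplacian_matrix :: "'v set \<Rightarrow> ('v \<Rightarrow> 'v \<Rightarrow> bool) \<Rightarrow> complex mat" where
  "laplacian_matrix V Adj = degree_matrix V Adj - adj_matrix V Adj"

definition signless_laplacian_matrix :: "'v set \<Rightarrow> ('v \<Rightarrow> 'v \<Rightarrow> bool) \<Rightarrow> complex mat" where
  "signless_laplacian_matrix V Adj = degree_matrix V Adj + adj_matrix V Adj"

definition mat_spectrum :: "complex mat \<Rightarrow> complex multiset" where
  "mat_spectrum A = proots (char_poly A)"

definition Spec :: "'v set \<Rightarrow> ('v \<Rightarrow> 'v \<Rightarrow> bool) \<Rightarrow> complex multiset" where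
  "Spec V Adj = mat_spectrum (adj_matrix V Adj)"

definition L_Spec :: "'v set \<Rightarrow> ('v \<Rightarrow> 'v \<Rightarrow> bool) \<Rightarrow> complex multiset" where
  "L_Spec V Adj = mat_spectrum (laplacian_matrix V Adj)"

definition Q_Spec :: "'v set \<Rightarrow> ('v \<Rightarrow> 'v \<Rightarrow> bool) \<Rightarrow> complex multiset" where
  "Q_Spec V Adj = mat_spectrum (signless_laplacian_matrix V Adj)"

definition num_edges :: "'v set \<Rightarrow> ('v \<Rightarrow> 'v \<Rightarrow> bool) \<Rightarrow> nat" where
  "num_edges V Adj = card {{v, w} | v w. v \<in> V \<and> w \<in> V \<and> Adj v w}"

definition avg_degree :: "'v set \<Rightarrow> ('v \<Rightarrow> 'v \<Rightarrow> bool) \<Rightarrow> real" where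
  "avg_degree V Adj = 2 * real (num_edges V Adj) / real (card V)"

definition energy :: "'v set \<Rightarrow> ('v \<Rightarrow> 'v \<Rightarrow> bool) \<Rightarrow> real" where
  "energy V Adj = (\<Sum>e\<in>#Spec V Adj. cmod e)"

definition laplacian_energy :: "'v set \<Rightarrow> ('v \<Rightarrow> 'v \<Rightarrow> bool) \<Rightarrow> real" where
  "laplacian_energy V Adj =
     (\<Sum>\<beta>\<in>#L_Spec V Adj. cmod (\<beta> - complex_of_real (avg_degree V Adj)))"

definition signless_laplacian_energy :: "'v set \<Rightarrow> ('v \<Rightarrow> 'v \<Rightarrow> bool) \<Rightarrow> real" where
  "signless_laplacian_energy V Adj =
     (\<Sum>\<gamma>\<in>#Q_Spec V Adj. cmod (\<gamma> - complex_of_real (avg_degree V Adj)))"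

end

(*
  Write x^a y^b as the pair (a, b). The centre of U_{6m} consists of the x^a with a even; the
  other conjugacy classes are {x^a, x^a y, x^a y^2} for odd a and {x^a y, x^a y^2} for even a,
  m of each kind. Two classes of the same kind contain commuting representatives (x^a and x^c,
  resp. x^a y and x^c y), whereas x^a y^b with a odd never commutes with x^c y^d with c even and
  d ~= 0. So the NCCC-graph is the complete bipartite graph K_{m,m}. Its adjacency, Laplacian and
  signless Laplacian matrices all have the form a I + b A(K_{m,m}), and one explicit change of
  basis diagonalises all of them: the all-ones vector and the vector of side signs are
  eigenvectors for a + b m and a - b m, and the differences of two standard basis vectors on the
  same side span the eigenspace of a, of dimension 2m - 2.
*)

theory Submission
  imports Defs
begin

section \<open>Spectra of the matrices a I + b A(K_{m,m})\<close>

lemma proots_linear_factors: "proots (\<Prod>x\<leftarrow>xs. [:- x, 1:]) = mset xs"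
proof (induction xs)
  case (Cons x xs)
  have "(\<Prod>x\<leftarrow>xs. [:- x, 1:]) \<noteq> 0"
    by (auto simp: prod_list_zero_iff)
  then have "proots (\<Prod>x\<leftarrow>x # xs. [:- x, 1:]) = proots [:- x, 1:] + proots (\<Prod>x\<leftarrow>xs. [:- x, 1:])"
    unfolding list.map prod_list.Cons by (intro proots_mult) simp_all
  then show ?case
    using Cons.IH by simp
qed simp

lemma proots_char_poly_mat_diag: "proots (char_poly (mat_diag n f)) = mset (map f [0..<n])"
proof -
  have "char_poly (mat_diag n f) = (\<Prod>x\<leftarrow>diag_mat (mat_diag n f). [:- x, 1:])"
    by (rule char_poly_upper_triangular[OF mat_diag_dim]) (simp add: upper_triangular_def mat_diag_def)
  also have "diag_mat (mat_diag n f) = map f [0..<n]"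
    by (simp add: diag_mat_def mat_diag_def)
  finally show ?thesis
    by (simp only: proots_linear_factors)
qed

lemma if_zero_times: "(if P then x else 0) * y = (if P then x * y else (0 :: 'a :: mult_zero))"
  by simp

definition side_sign :: "bool \<Rightarrow> complex" where
  "side_sign t = (if t then 1 else -1)"

definition bipartite_mat :: "nat \<Rightarrow> (nat \<Rightarrow> bool) \<Rightarrow> complex \<Rightarrow> complex \<Rightarrow> complex mat" where
  "bipartite_mat n s a b = mat n n (\<lambda>(i, j). (if i = j then a else 0) + (if s i \<noteq> s j then b else 0))"

(* Column p is the all-ones vector, column q the vector of side signs, and any other column j
   is e_j - e_r, where r is the one of p, q on the side of j. *)
definition bipartite_eigvecs :: "nat \<Rightarrow> (nat \<Rightarrow> bool) \<Rightarrow> nat \<Rightarrow> nat \<Rightarrow> complex mat" where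
  "bipartite_eigvecs n s p q = mat n n (\<lambda>(k, j).
     if j = p then 1 else if j = q then side_sign (s k)
     else (if k = j then 1 else 0) - (if k = (if s j then p else q) then 1 else 0))"

definition bipartite_eigvecs_inv :: "nat \<Rightarrow> nat \<Rightarrow> (nat \<Rightarrow> bool) \<Rightarrow> nat \<Rightarrow> nat \<Rightarrow> complex mat" where
  "bipartite_eigvecs_inv n m s p q = mat n n (\<lambda>(i, k).
     if i = p then 1 / (2 * of_nat m) else if i = q then side_sign (s k) / (2 * of_nat m)
     else (if i = k then 1 else 0) - (if s i = s k then 1 / of_nat m else 0))"

definition bipartite_eigenvalue :: "nat \<Rightarrow> nat \<Rightarrow> nat \<Rightarrow> complex \<Rightarrow> complex \<Rightarrow> nat \<Rightarrow> complex" where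
  "bipartite_eigenvalue m p q a b i =
     (if i = p then a + b * of_nat m else if i = q then a - b * of_nat m else a)"

locale balanced_labelling =
  fixes n m :: nat and s :: "nat \<Rightarrow> bool" and p q :: nat
  assumes card_True: "card {i \<in> {0..<n}. s i} = m" and card_False: "card {i \<in> {0..<n}. \<not> s i} = m"
    and m_pos: "m > 0" and p: "p < n" "s p" and q: "q < n" "\<not> s q"
begin

lemma p_neq_q: "p \<noteq> q"
  using p q by auto

lemma sum_over_sides: "(\<Sum>k = 0..<n. f (s k)) = of_nat m * (f True + f False :: complex)"
proof -
  have "(\<Sum>k = 0..<n. f (s k)) = (\<Sum>k = 0..<n. if s k then f True else f False)"
    by (rule sum.cong) auto
  also have "\<dots> = of_nat (card {k \<in> {0..<n}. s k}) * f True + of_nat (card {k \<in> {0..<n}. \<not> s k}) * f False"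
    by (simp add: sum.If_cases Int_def)
  also have "\<dots> = of_nat m * (f True + f False)"
    using card_True card_False by (simp add: algebra_simps)
  finally show ?thesis .
qed

lemma of_nat_n: "(of_nat n :: complex) = 2 * of_nat m"
  using sum_over_sides[of "\<lambda>_. 1"] by simp

(* The side sums are stated in the simp normal forms in which they occur below;
   in particular s i ~= s k is normalised to s i = (~ s k). *)
lemma sum_same_side: "(\<Sum>k = 0..<n. if t = s k then c else 0) = of_nat m * (c :: complex)"
  using sum_over_sides[of "\<lambda>t'. if t = t' then c else 0"] by (cases t) simp_all

lemma sum_other_side: "(\<Sum>k = 0..<n. if t = (\<not> s k) then c else 0) = of_nat m * (c :: complex)"
  using sum_over_sides[of "\<lambda>t'. if t = (\<not> t') then c else 0"] by (cases t) simp_all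

lemma sum_same_side_sign:
  "(\<Sum>k = 0..<n. if t = s k then c * side_sign (s k) else 0) = of_nat m * c * side_sign t"
  using sum_over_sides[of "\<lambda>t'. if t = t' then c * side_sign t' else 0"] by (cases t) simp_all

lemma sum_other_side_sign:
  "(\<Sum>k = 0..<n. if t = (\<not> s k) then c * side_sign (s k) else 0) = - (of_nat m * c * side_sign t)"
  using sum_over_sides[of "\<lambda>t'. if t = (\<not> t') then c * side_sign t' else 0"]
  by (cases t) (simp_all add: side_sign_def)

lemma sum_side_sign: "(\<Sum>k = 0..<n. side_sign (s k)) = 0"
  using sum_over_sides[of side_sign] by (simp add: side_sign_def)

lemma sum_side_sign_sq: "(\<Sum>k = 0..<n. side_sign (s k) * side_sign (s k)) = 2 * of_nat m"
  using sum_over_sides[of "\<lambda>t. side_sign t * side_sign t"] by (simp add: side_sign_def)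

lemma row_mult_eigvecs:
  assumes "j < n"
  shows "(\<Sum>k = 0..<n. w k * bipartite_eigvecs n s p q $$ (k, j)) =
    (if j = p then (\<Sum>k = 0..<n. w k) else if j = q then (\<Sum>k = 0..<n. w k * side_sign (s k))
     else w j - w (if s j then p else q))"
proof -
  let ?r = "if s j then p else q"
  have "(\<Sum>k = 0..<n. w k * bipartite_eigvecs n s p q $$ (k, j)) =
    (if j = p then (\<Sum>k = 0..<n. w k) else if j = q then (\<Sum>k = 0..<n. w k * side_sign (s k))
     else (\<Sum>k = 0..<n. (if k = j then w k else 0) - (if k = ?r then w k else 0)))"
    using assms by (auto simp: bipartite_eigvecs_def intro: sum.cong)
  also have "(\<Sum>k = 0..<n. (if k = j then w k else 0) - (if k = ?r then w k else 0)) = w j - w ?r"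
    using assms p q by (simp add: sum_subtractf)
  finally show ?thesis .
qed

lemma eigvecs_inv_mult_eigvecs: "bipartite_eigvecs_inv n m s p q * bipartite_eigvecs n s p q = 1\<^sub>m n"
proof (rule eq_matI)
  fix i j assume "i < dim_row (1\<^sub>m n :: complex mat)" "j < dim_col (1\<^sub>m n :: complex mat)"
  then have i: "i < n" and j: "j < n" by simp_all
  have m: "(of_nat m :: complex) \<noteq> 0"
    using m_pos by simp
  define w where "w k = (if i = p then 1 / (2 * of_nat m) else if i = q then side_sign (s k) / (2 * of_nat m)
     else (if i = k then 1 else 0) - (if s i = s k then 1 / of_nat m else 0))" for k
  have "(bipartite_eigvecs_inv n m s p q * bipartite_eigvecs n s p q) $$ (i, j)
      = (\<Sum>k = 0..<n. w k * bipartite_eigvecs n s p q $$ (k, j))"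
    using i j by (simp add: bipartite_eigvecs_inv_def bipartite_eigvecs_def w_def scalar_prod_def)
  also have "\<dots> = 1\<^sub>m n $$ (i, j)"
  proof -
    consider "i = p" | "i = q" | "i \<noteq> p" "i \<noteq> q"
      by blast
    then show ?thesis
    proof cases
      case 1
      then show ?thesis
        unfolding row_mult_eigvecs[OF j] using j p q p_neq_q m of_nat_n
        by (simp add: w_def flip: sum_divide_distrib) (simp add: sum_side_sign)
    next
      case 2
      then show ?thesis
        unfolding row_mult_eigvecs[OF j] using j p q p_neq_q m
        by (simp add: w_def flip: sum_divide_distrib) (simp add: sum_side_sign sum_side_sign_sq)
    next
      case 3
      then show ?thesis
        unfolding row_mult_eigvecs[OF j] using i j p q m
        by (simp add: w_def left_diff_distrib if_zero_times sum_subtractf sum_same_side sum_same_side_sign)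
    qed
  qed
  finally show "(bipartite_eigvecs_inv n m s p q * bipartite_eigvecs n s p q) $$ (i, j) = 1\<^sub>m n $$ (i, j)" .
qed (simp_all add: bipartite_eigvecs_inv_def bipartite_eigvecs_def)

lemma bipartite_mat_mult_eigvecs:
  "bipartite_mat n s a b * bipartite_eigvecs n s p q
     = bipartite_eigvecs n s p q * mat_diag n (bipartite_eigenvalue m p q a b)"
proof (rule eq_matI)
  fix i j assume "i < dim_row (bipartite_eigvecs n s p q * mat_diag n (bipartite_eigenvalue m p q a b))"
    "j < dim_col (bipartite_eigvecs n s p q * mat_diag n (bipartite_eigenvalue m p q a b))"
  then have i: "i < n" and j: "j < n"
    by (simp_all add: bipartite_eigvecs_def mat_diag_def)
  define w where "w k = (if i = k then a else 0) + (if s i \<noteq> s k then b else 0)" for k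
  have "(bipartite_mat n s a b * bipartite_eigvecs n s p q) $$ (i, j)
      = (\<Sum>k = 0..<n. w k * bipartite_eigvecs n s p q $$ (k, j))"
    using i j by (simp add: bipartite_mat_def bipartite_eigvecs_def w_def scalar_prod_def)
  also have "\<dots> = bipartite_eigvecs n s p q $$ (i, j) * bipartite_eigenvalue m p q a b j"
  proof -
    have "(\<Sum>k = 0..<n. w k) = a + b * of_nat m"
      using i by (simp add: w_def sum.distrib sum_other_side)
    moreover have "(\<Sum>k = 0..<n. w k * side_sign (s k)) = side_sign (s i) * (a - b * of_nat m)"
      using i by (simp add: w_def distrib_right if_zero_times sum.distrib sum_other_side_sign)
        (simp add: algebra_simps)
    ultimately show ?thesis
      unfolding row_mult_eigvecs[OF j] using i j p q p_neq_q
      by (auto simp: w_def bipartite_eigvecs_def bipartite_eigenvalue_def)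
  qed
  also have "\<dots> = (bipartite_eigvecs n s p q * mat_diag n (bipartite_eigenvalue m p q a b)) $$ (i, j)"
    using i j by (simp add: mat_diag_mult_right[of _ n n] bipartite_eigvecs_def)
  finally show "(bipartite_mat n s a b * bipartite_eigvecs n s p q) $$ (i, j)
      = (bipartite_eigvecs n s p q * mat_diag n (bipartite_eigenvalue m p q a b)) $$ (i, j)" .
qed (simp_all add: bipartite_mat_def bipartite_eigvecs_def mat_diag_def)

lemma similar_bipartite_mat_diag:
  "similar_mat (bipartite_mat n s a b) (mat_diag n (bipartite_eigenvalue m p q a b))"
proof -
  let ?M = "bipartite_mat n s a b" and ?P = "bipartite_eigvecs n s p q"
  let ?Q = "bipartite_eigvecs_inv n m s p q" and ?D = "mat_diag n (bipartite_eigenvalue m p q a b)"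
  have carrier: "{?M, ?D, ?P, ?Q} \<subseteq> carrier_mat n n"
    by (simp add: bipartite_mat_def bipartite_eigvecs_def bipartite_eigvecs_inv_def)
  then have PQ: "?P * ?Q = 1\<^sub>m n"
    using mat_mult_left_right_inverse eigvecs_inv_mult_eigvecs by blast
  have "?P * ?D * ?Q = ?M * ?P * ?Q"
    by (simp only: bipartite_mat_mult_eigvecs)
  also have "\<dots> = ?M * (?P * ?Q)"
    using carrier by (simp add: assoc_mult_mat[of _ n n _ n _ n])
  also have "\<dots> = ?M"
    using carrier by (simp add: PQ right_mult_one_mat[of _ n n])
  finally show ?thesis
    using carrier PQ eigvecs_inv_mult_eigvecs
    by (intro similar_matI[where P = ?P and Q = ?Q and n = n]) simp_all
qed

end

lemma proots_char_poly_bipartite_mat: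
  assumes "card {i \<in> {0..<n}. s i} = m" "card {i \<in> {0..<n}. \<not> s i} = m" "m > 0"
  shows "proots (char_poly (bipartite_mat n s a b))
    = replicate_mset (n - 2) a + {# a + b * of_nat m, a - b * of_nat m #}"
proof -
  have "{i \<in> {0..<n}. s i} \<noteq> {}" "{i \<in> {0..<n}. \<not> s i} \<noteq> {}"
    using assms by (metis card.empty less_irrefl)+
  then obtain p q where p: "p < n" "s p" and q: "q < n" "\<not> s q"
    by auto
  interpret balanced_labelling n m s p q
    using assms p q by unfold_locales
  have "proots (char_poly (bipartite_mat n s a b)) = mset (map (bipartite_eigenvalue m p q a b) [0..<n])"
    using char_poly_similar[OF similar_bipartite_mat_diag] by (simp add: proots_char_poly_mat_diag)
  also have "\<dots> = image_mset (bipartite_eigenvalue m p q a b) (mset_set (insert p (insert q ({0..<n} - {p, q}))))"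
  proof -
    have "insert p (insert q ({0..<n} - {p, q})) = {0..<n}"
      using p q by auto
    then show ?thesis
      by (simp add: mset_map)
  qed
  also have "\<dots> = {# a + b * of_nat m, a - b * of_nat m #}
      + image_mset (bipartite_eigenvalue m p q a b) (mset_set ({0..<n} - {p, q}))"
    using p q p_neq_q by (auto simp: bipartite_eigenvalue_def)
  also have "image_mset (bipartite_eigenvalue m p q a b) (mset_set ({0..<n} - {p, q}))
      = image_mset (\<lambda>_. a) (mset_set ({0..<n} - {p, q}))"
    by (intro image_mset_cong) (auto simp: bipartite_eigenvalue_def)
  also have "\<dots> = replicate_mset (n - 2) a"
    using p q p_neq_q by (auto simp: image_mset_const_eq card_Diff_subset numeral_2_eq_2)
  finally show ?thesis
    by (simp add: add.commute)
qed

section \<open>Balanced complete bipartite graphs\<close>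

lemma card_filter_bij_betw:
  assumes "bij_betw f A B"
  shows "card {i \<in> A. P (f i)} = card {v \<in> B. P v}"
proof -
  have "bij_betw f {i \<in> A. P (f i)} {v \<in> B. P v}"
    using assms by (auto simp: bij_betw_def inj_on_def)
  then show ?thesis
    by (rule bij_betw_same_card)
qed

locale balanced_complete_bipartite =
  fixes V :: "'v set" and X :: "'v set" and Adj :: "'v \<Rightarrow> 'v \<Rightarrow> bool" and m :: nat
  assumes finite_V: "finite V" and X_subset: "X \<subseteq> V"
    and card_X: "card X = m" and card_V_minus_X: "card (V - X) = m" and m_pos: "m > 0"
    and Adj_iff: "\<And>v w. v \<in> V \<Longrightarrow> w \<in> V \<Longrightarrow> Adj v w \<longleftrightarrow> (v \<in> X \<longleftrightarrow> w \<notin> X)"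
begin

lemma card_V: "card V = 2 * m"
  using card_Diff_subset[OF finite_subset[OF X_subset finite_V] X_subset] card_mono[OF finite_V X_subset]
  by (simp add: card_X card_V_minus_X)

definition side :: "nat \<Rightarrow> bool" where
  "side i \<longleftrightarrow> vertex_enum V i \<in> X"

lemma bij_vertex_enum: "bij_betw (vertex_enum V) {0..<2*m} V"
  unfolding vertex_enum_def card_V[symmetric] using ex_bij_betw_nat_finite[OF finite_V] by (rule someI_ex)

lemma vertex_enum_in_V: "i < 2*m \<Longrightarrow> vertex_enum V i \<in> V"
  using bij_vertex_enum by (auto simp: bij_betw_def)

lemma card_side: "card {i \<in> {0..<2*m}. side i} = m" "card {i \<in> {0..<2*m}. \<not> side i} = m"
proof -
  have "{v \<in> V. v \<in> X} = X" "{v \<in> V. v \<notin> X} = V - X"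
    using X_subset by auto
  then show "card {i \<in> {0..<2*m}. side i} = m" "card {i \<in> {0..<2*m}. \<not> side i} = m"
    unfolding side_def card_filter_bij_betw[OF bij_vertex_enum, of "\<lambda>v. v \<in> X"]
      card_filter_bij_betw[OF bij_vertex_enum, of "\<lambda>v. v \<notin> X"]
    by (simp_all add: card_X card_V_minus_X)
qed

lemma graph_degree_eq: "v \<in> V \<Longrightarrow> graph_degree V Adj v = m"
proof -
  assume v: "v \<in> V"
  have "{w \<in> V. Adj v w} = (if v \<in> X then V - X else X)"
    using v X_subset Adj_iff by auto
  then show ?thesis
    by (simp add: graph_degree_def card_X card_V_minus_X)
qed

lemma adj_matrix_eq: "adj_matrix V Adj = bipartite_mat (2*m) side 0 1"
  by (rule eq_matI) (auto simp: adj_matrix_def bipartite_mat_def card_V side_def Adj_iff vertex_enum_in_V)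

lemma degree_matrix_eq: "degree_matrix V Adj = bipartite_mat (2*m) side (of_nat m) 0"
  by (rule eq_matI) (auto simp: degree_matrix_def bipartite_mat_def card_V graph_degree_eq vertex_enum_in_V)

lemma laplacian_matrix_eq: "laplacian_matrix V Adj = bipartite_mat (2*m) side (of_nat m) (-1)"
  unfolding laplacian_matrix_def adj_matrix_eq degree_matrix_eq
  by (rule eq_matI) (auto simp: bipartite_mat_def)

lemma signless_laplacian_matrix_eq: "signless_laplacian_matrix V Adj = bipartite_mat (2*m) side (of_nat m) 1"
  unfolding signless_laplacian_matrix_def adj_matrix_eq degree_matrix_eq
  by (rule eq_matI) (auto simp: bipartite_mat_def)

lemma Spec_eq: "Spec V Adj = replicate_mset (2*m - 2) 0 + {# of_nat m, - of_nat m #}"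
  unfolding Spec_def mat_spectrum_def adj_matrix_eq proots_char_poly_bipartite_mat[OF card_side m_pos]
  by simp

lemma L_Spec_eq: "L_Spec V Adj = {# 0 #} + replicate_mset (2*m - 2) (of_nat m) + {# 2 * of_nat m #}"
  unfolding L_Spec_def mat_spectrum_def laplacian_matrix_eq proots_char_poly_bipartite_mat[OF card_side m_pos]
  by simp

lemma Q_Spec_eq: "Q_Spec V Adj = L_Spec V Adj"
  unfolding Q_Spec_def L_Spec_def mat_spectrum_def laplacian_matrix_eq signless_laplacian_matrix_eq
    proots_char_poly_bipartite_mat[OF card_side m_pos]
  by simp

lemma num_edges_eq: "num_edges V Adj = m * m"
proof -
  have edges: "{{v, w} | v w. v \<in> V \<and> w \<in> V \<and> Adj v w} = (\<lambda>(v, w). {v, w}) ` (X \<times> (V - X))"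
  proof (intro equalityI subsetI)
    fix e
    assume "e \<in> {{v, w} | v w. v \<in> V \<and> w \<in> V \<and> Adj v w}"
    then obtain v w where e: "e = {v, w}" and vw: "v \<in> V" "w \<in> V" "Adj v w"
      by blast
    then consider "v \<in> X" "w \<in> V - X" | "w \<in> X" "v \<in> V - X"
      using Adj_iff by auto
    then show "e \<in> (\<lambda>(v, w). {v, w}) ` (X \<times> (V - X))"
    proof cases
      case 1
      then show ?thesis
        unfolding e by (intro rev_image_eqI[of "(v, w)"]) simp_all
    next
      case 2
      then show ?thesis
        unfolding e by (intro rev_image_eqI[of "(w, v)"]) (simp_all add: insert_commute)
    qed
  next
    fix e
    assume "e \<in> (\<lambda>(v, w). {v, w}) ` (X \<times> (V - X))"
    then obtain v w where "e = {v, w}" "v \<in> X" "w \<in> V - X"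
      by auto
    then show "e \<in> {{v, w} | v w. v \<in> V \<and> w \<in> V \<and> Adj v w}"
      using X_subset Adj_iff by blast
  qed
  have "inj_on (\<lambda>(v, w). {v, w}) (X \<times> (V - X))"
    by (auto simp: inj_on_def doubleton_eq_iff)
  then show ?thesis
    unfolding num_edges_def edges by (simp add: card_image card_cartesian_product card_X card_V_minus_X)
qed

lemma avg_degree_eq: "avg_degree V Adj = real m"
  using m_pos by (simp add: avg_degree_def num_edges_eq card_V)

lemma energy_eq: "energy V Adj = 2 * real m"
  by (simp add: energy_def Spec_eq)

lemma laplacian_energy_eq: "laplacian_energy V Adj = 2 * real m"
  by (simp add: laplacian_energy_def L_Spec_eq avg_degree_eq)

lemma signless_laplacian_energy_eq: "signless_laplacian_energy V Adj = 2 * real m"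
  by (simp add: signless_laplacian_energy_def Q_Spec_eq L_Spec_eq avg_degree_eq)

end

section \<open>The group U_{6m}\<close>

(* twist c b = (-1)^c b mod 3, since y^b x^c = x^c y^((-1)^c b). *)
definition twist :: "nat \<Rightarrow> nat \<Rightarrow> nat" where
  "twist c b = (if even c then b else (3 - b) mod 3)"

lemma less_3_cases: "(b :: nat) < 3 \<longleftrightarrow> b = 0 \<or> b = 1 \<or> b = 2"
  by auto

lemma twist_less_3: "b < 3 \<Longrightarrow> twist c b < 3"
  by (simp add: twist_def)

lemma twist_add: "b < 3 \<Longrightarrow> d < 3 \<Longrightarrow> twist c ((b + d) mod 3) = (twist c b + twist c d) mod 3"
  by (auto simp: twist_def less_3_cases)

lemma twist_twist: "b < 3 \<Longrightarrow> twist e (twist c b) = twist (c + e) b"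
  by (auto simp: twist_def less_3_cases)

lemma twist_mod_double: "twist (c mod (2 * m)) b = twist c b"
  by (simp add: twist_def dvd_mod_iff)

lemma U6m_carrier: "carrier (U6m m) = {0..<2*m} \<times> {0..<3}"
  by (simp add: U6m_def)

lemma U6m_one: "\<one>\<^bsub>U6m m\<^esub> = (0, 0)"
  by (simp add: U6m_def)

lemma U6m_mult: "(a, b) \<otimes>\<^bsub>U6m m\<^esub> (c, d) = ((a + c) mod (2*m), (twist c b + d) mod 3)"
  by (simp add: U6m_def twist_def)

lemma U6m_assoc:
  assumes "b < 3" "d < 3"
  shows "(a, b) \<otimes>\<^bsub>U6m m\<^esub> (c, d) \<otimes>\<^bsub>U6m m\<^esub> (e, f) = (a, b) \<otimes>\<^bsub>U6m m\<^esub> ((c, d) \<otimes>\<^bsub>U6m m\<^esub> (e, f))"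
proof -
  have "((a + c) mod (2*m) + e) mod (2*m) = (a + (c + e) mod (2*m)) mod (2*m)"
    by (simp add: mod_add_left_eq mod_add_right_eq add.assoc)
  moreover have "(twist e ((twist c b + d) mod 3) + f) mod 3 = (twist (c + e) b + twist e d + f) mod 3"
    using assms by (simp add: twist_add twist_less_3 twist_twist mod_add_left_eq)
  moreover have "(twist ((c + e) mod (2*m)) b + (twist e d + f) mod 3) mod 3 = (twist (c + e) b + twist e d + f) mod 3"
    by (simp add: twist_mod_double mod_add_right_eq add.assoc)
  ultimately show ?thesis
    by (simp add: U6m_mult)
qed

lemma U6m_inv_mult:
  assumes "a < 2*m" "b < 3"
  shows "((2*m - a) mod (2*m), twist (Suc a) b) \<otimes>\<^bsub>U6m m\<^esub> (a, b) = \<one>\<^bsub>U6m m\<^esub>"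
  using assms by (auto simp: U6m_mult U6m_one mod_add_left_eq twist_def less_3_cases)

lemma group_U6m:
  assumes "m > 0"
  shows "group (U6m m)"
proof (rule groupI)
  fix x y z
  assume "x \<in> carrier (U6m m)" "y \<in> carrier (U6m m)" "z \<in> carrier (U6m m)"
  then show "x \<otimes>\<^bsub>U6m m\<^esub> y \<otimes>\<^bsub>U6m m\<^esub> z = x \<otimes>\<^bsub>U6m m\<^esub> (y \<otimes>\<^bsub>U6m m\<^esub> z)"
    by (auto simp: U6m_carrier U6m_assoc)
next
  fix x
  assume "x \<in> carrier (U6m m)"
  then obtain a b where x: "x = (a, b)" "a < 2*m" "b < 3"
    by (auto simp: U6m_carrier)
  moreover have "((2*m - a) mod (2*m), twist (Suc a) b) \<in> carrier (U6m m)"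
    using assms x by (simp add: U6m_carrier twist_less_3)
  ultimately show "\<exists>y \<in> carrier (U6m m). y \<otimes>\<^bsub>U6m m\<^esub> x = \<one>\<^bsub>U6m m\<^esub>"
    using U6m_inv_mult by blast
qed (use assms in \<open>auto simp: U6m_carrier U6m_mult U6m_one twist_less_3 twist_def\<close>)

lemma U6m_inv:
  assumes "m > 0" "a < 2*m" "b < 3"
  shows "inv\<^bsub>U6m m\<^esub> (a, b) = ((2*m - a) mod (2*m), twist (Suc a) b)"
  using group.inv_equality[OF group_U6m U6m_inv_mult] assms by (simp add: U6m_carrier twist_less_3)

lemma U6m_conj:
  assumes "m > 0" "a < 2*m" "b < 3" "c < 2*m" "d < 3"
  shows "(c, d) \<otimes>\<^bsub>U6m m\<^esub> (a, b) \<otimes>\<^bsub>U6m m\<^esub> inv\<^bsub>U6m m\<^esub> (c, d)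
    = (a, twist c (if even a then b else (b + d) mod 3))"
proof -
  have "((c + a) mod (2*m) + (2*m - c) mod (2*m)) mod (2*m) = (a + 2*m) mod (2*m)"
    using assms by (simp add: mod_add_eq)
  moreover have "twist ((2*m - c) mod (2*m)) x = twist c x" for x
    using assms by (simp only: twist_mod_double) (simp add: twist_def)
  ultimately show ?thesis
    using assms by (auto simp: U6m_inv U6m_mult twist_def less_3_cases)
qed

lemma U6m_commute_iff:
  assumes "b < 3" "d < 3"
  shows "(a, b) \<otimes>\<^bsub>U6m m\<^esub> (c, d) = (c, d) \<otimes>\<^bsub>U6m m\<^esub> (a, b) \<longleftrightarrow>
    (if even a then even c \<or> b = 0 else if even c then d = 0 else b = d)"
  using assms by (auto simp: U6m_mult add.commute twist_def less_3_cases)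

definition class_y_exponents :: "nat \<Rightarrow> nat \<Rightarrow> nat set" where
  "class_y_exponents a b = (if odd a then {0, 1, 2} else if b = 0 then {0} else {1, 2})"

lemma twist_conj_in_class_y_exponents:
  assumes "b < 3"
  shows "twist c (if even a then b else (b + d) mod 3) \<in> class_y_exponents a b"
proof (cases "even a")
  case True
  then show ?thesis
    using assms by (auto simp: class_y_exponents_def twist_def less_3_cases)
next
  case False
  then show ?thesis
    using twist_less_3[of "(b + d) mod 3" c] by (auto simp: class_y_exponents_def)
qed

lemma class_y_exponents_twist_conj:
  assumes "b < 3" "e \<in> class_y_exponents a b"
  obtains c d where "c \<le> 1" "d < 3" "twist c (if even a then b else (b + d) mod 3) = e"
proof (cases "even a")
  case even: True
  show ?thesis
  proof (cases "e = b")
    case True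
    then show ?thesis
      using even by (intro that[of 0 0]) (simp_all add: twist_def)
  next
    case False
    with even assms have "b \<in> {1, 2}" "e \<in> {1, 2}"
      by (auto simp: class_y_exponents_def split: if_splits)
    then show ?thesis
      using False even by (intro that[of 1 0]) (auto simp: twist_def)
  qed
next
  case False
  have "(b + (e + 3 - b) mod 3) mod 3 = (e + 3) mod 3"
    using assms(1) by (simp add: mod_add_right_eq)
  moreover have "e < 3"
    using assms(2) False by (auto simp: class_y_exponents_def)
  ultimately show ?thesis
    using False by (intro that[of 0 "(e + 3 - b) mod 3"]) (simp_all add: twist_def)
qed

lemma U6m_conj_class:
  assumes "m > 0" "a < 2*m" "b < 3"
  shows "conj_class (U6m m) (a, b) = {a} \<times> class_y_exponents a b"
proof (intro equalityI subsetI)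
  fix z
  assume "z \<in> conj_class (U6m m) (a, b)"
  then obtain g where g: "g \<in> carrier (U6m m)" "z = g \<otimes>\<^bsub>U6m m\<^esub> (a, b) \<otimes>\<^bsub>U6m m\<^esub> inv\<^bsub>U6m m\<^esub> g"
    unfolding conj_class_def by blast
  then obtain c d where "c < 2*m" "d < 3" "z = (c, d) \<otimes>\<^bsub>U6m m\<^esub> (a, b) \<otimes>\<^bsub>U6m m\<^esub> inv\<^bsub>U6m m\<^esub> (c, d)"
    by (cases g) (auto simp: U6m_carrier)
  then show "z \<in> {a} \<times> class_y_exponents a b"
    using assms twist_conj_in_class_y_exponents by (simp add: U6m_conj)
next
  fix z
  assume "z \<in> {a} \<times> class_y_exponents a b"
  then obtain e where z: "z = (a, e)" and e: "e \<in> class_y_exponents a b"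
    by blast
  obtain c d where "c \<le> 1" "d < 3" and twist: "twist c (if even a then b else (b + d) mod 3) = e"
    using class_y_exponents_twist_conj[OF assms(3) e] .
  with assms(1) have cd: "c < 2*m" "d < 3"
    by simp_all
  with twist have "z = (c, d) \<otimes>\<^bsub>U6m m\<^esub> (a, b) \<otimes>\<^bsub>U6m m\<^esub> inv\<^bsub>U6m m\<^esub> (c, d)"
    using assms z by (simp add: U6m_conj)
  moreover have "(c, d) \<in> carrier (U6m m)"
    using cd by (simp add: U6m_carrier)
  ultimately have "\<exists>g. z = g \<otimes>\<^bsub>U6m m\<^esub> (a, b) \<otimes>\<^bsub>U6m m\<^esub> inv\<^bsub>U6m m\<^esub> g \<and> g \<in> carrier (U6m m)"
    by (intro exI[of _ "(c, d)"] conjI)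
  then show "z \<in> conj_class (U6m m) (a, b)"
    by (simp only: conj_class_def mem_Collect_eq)
qed

lemma U6m_center:
  assumes "m > 0"
  shows "group_center (U6m m) = {(a, 0) | a. a < 2*m \<and> even a}"
proof (intro equalityI subsetI)
  fix z
  assume z: "z \<in> group_center (U6m m)"
  then obtain a b where ab: "z = (a, b)" "a < 2*m" "b < 3"
    by (auto simp: group_center_def U6m_carrier)
  have "(a, b) \<otimes>\<^bsub>U6m m\<^esub> g = g \<otimes>\<^bsub>U6m m\<^esub> (a, b)" if "g \<in> carrier (U6m m)" for g
    using z ab that by (simp add: group_center_def)
  \<comment> \<open>commuting with x = (1, 0) forces b = 0, commuting with y = (0, 1) forces a to be even\<close>
  then have "(a, b) \<otimes>\<^bsub>U6m m\<^esub> (1, 0) = (1, 0) \<otimes>\<^bsub>U6m m\<^esub> (a, b)"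
    "(a, b) \<otimes>\<^bsub>U6m m\<^esub> (0, 1) = (0, 1) \<otimes>\<^bsub>U6m m\<^esub> (a, b)"
    using assms by (simp_all add: U6m_carrier)
  then show "z \<in> {(a, 0) | a. a < 2*m \<and> even a}"
    using ab by (auto simp: U6m_commute_iff split: if_splits)
next
  fix z :: "nat \<times> nat"
  assume "z \<in> {(a, 0) | a. a < 2*m \<and> even a}"
  then obtain a where a: "z = (a, 0)" "a < 2*m" "even a"
    by blast
  then have "z \<otimes>\<^bsub>U6m m\<^esub> (c, d) = (c, d) \<otimes>\<^bsub>U6m m\<^esub> z" if "d < 3" for c d
    using that by (simp add: U6m_commute_iff)
  then show "z \<in> group_center (U6m m)"
    using a by (auto simp: group_center_def U6m_carrier)
qed

section \<open>The NCCC-graph of U_{6m}\<close>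

definition odd_classes :: "nat \<Rightarrow> (nat \<times> nat) set set" where
  "odd_classes m = (\<lambda>k. {2*k + 1} \<times> {0, 1, 2}) ` {..<m}"

definition even_classes :: "nat \<Rightarrow> (nat \<times> nat) set set" where
  "even_classes m = (\<lambda>k. {2*k} \<times> {1, 2}) ` {..<m}"

lemma odd_even_classes_disjoint: "odd_classes m \<inter> even_classes m = {}"
proof -
  have "{2*k + 1} \<times> {0, 1, 2} \<noteq> {2*l} \<times> {1, 2 :: nat}" for k l :: nat
  proof
    assume "{2*k + 1} \<times> {0, 1, 2} = {2*l} \<times> {1, 2 :: nat}"
    then have "(2*k + 1, 1) \<in> {2*l} \<times> {1, 2 :: nat}"
      by blast
    then have "2*k + 1 = 2*l"
      by simp
    then show False
      by presburger
  qed
  then show ?thesis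
    by (auto simp: odd_classes_def even_classes_def)
qed

lemma card_odd_classes: "card (odd_classes m) = m"
proof -
  have "inj_on (\<lambda>k. {2*k + 1} \<times> {0, 1, 2 :: nat}) {..<m}"
  proof (rule inj_onI)
    fix k l :: nat
    assume "{2*k + 1} \<times> {0, 1, 2 :: nat} = {2*l + 1} \<times> {0, 1, 2}"
    then have "(2*k + 1, 0 :: nat) \<in> {2*l + 1} \<times> {0, 1, 2}"
      by blast
    then show "k = l"
      by simp
  qed
  then show ?thesis
    by (simp add: odd_classes_def card_image)
qed

lemma card_even_classes: "card (even_classes m) = m"
proof -
  have "inj_on (\<lambda>k. {2*k} \<times> {1, 2 :: nat}) {..<m}"
  proof (rule inj_onI)
    fix k l :: nat
    assume "{2*k} \<times> {1, 2 :: nat} = {2*l} \<times> {1, 2}"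
    then have "(2*k, 1 :: nat) \<in> {2*l} \<times> {1, 2}"
      by blast
    then show "k = l"
      by simp
  qed
  then show ?thesis
    by (simp add: even_classes_def card_image)
qed

lemma nccc_adj_sym: "nccc_adj G C D \<longleftrightarrow> nccc_adj G D C"
  unfolding nccc_adj_def by (metis (no_types))

lemma U6m_conj_class_noncentral:
  assumes "m > 0" "(a, b) \<in> carrier (U6m m) - group_center (U6m m)"
  shows "conj_class (U6m m) (a, b) \<in> odd_classes m \<union> even_classes m"
proof -
  have ab: "a < 2*m" "b < 3" "\<not> (even a \<and> b = 0)"
    using assms by (auto simp: U6m_carrier U6m_center)
  show ?thesis
  proof (cases "even a")
    case True
    then obtain k where k: "a = 2*k"
      by blast
    then have "conj_class (U6m m) (a, b) = {2*k} \<times> {1, 2}" "k < m"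
      using ab True assms by (simp_all add: U6m_conj_class class_y_exponents_def)
    then show ?thesis
      unfolding even_classes_def by (intro UnI2 rev_image_eqI) simp_all
  next
    case False
    then obtain k where k: "a = 2*k + 1"
      using oddE by blast
    then have "conj_class (U6m m) (a, b) = {2*k + 1} \<times> {0, 1, 2}" "k < m"
      using ab False assms by (simp_all add: U6m_conj_class class_y_exponents_def)
    then show ?thesis
      unfolding odd_classes_def by (intro UnI1 rev_image_eqI) simp_all
  qed
qed

lemma nccc_vertices_U6m:
  assumes "m > 0"
  shows "nccc_vertices (U6m m) = odd_classes m \<union> even_classes m"
proof (intro equalityI subsetI)
  fix C
  assume "C \<in> nccc_vertices (U6m m)"
  then obtain x where "x \<in> carrier (U6m m) - group_center (U6m m)" "C = conj_class (U6m m) x"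
    unfolding nccc_vertices_def by blast
  then show "C \<in> odd_classes m \<union> even_classes m"
    using U6m_conj_class_noncentral[OF assms] by (cases x) simp
next
  fix C
  assume "C \<in> odd_classes m \<union> even_classes m"
  then obtain k where k: "k < m" and "C = {2*k + 1} \<times> {0, 1, 2} \<or> C = {2*k} \<times> {1, 2}"
    unfolding odd_classes_def even_classes_def by blast
  then have "C = conj_class (U6m m) (2*k + 1, 0) \<or> C = conj_class (U6m m) (2*k, 1)"
    using assms by (simp add: U6m_conj_class class_y_exponents_def)
  moreover have "(2*k + 1, 0) \<in> carrier (U6m m) - group_center (U6m m)"
    "(2*k, 1) \<in> carrier (U6m m) - group_center (U6m m)"
    using k assms by (auto simp: U6m_carrier U6m_center)
  ultimately show "C \<in> nccc_vertices (U6m m)"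
    unfolding nccc_vertices_def by blast
qed

lemma not_nccc_adj_odd_classes:
  assumes "C \<in> odd_classes m" "D \<in> odd_classes m"
  shows "\<not> nccc_adj (U6m m) C D"
proof -
  obtain k l where "C = {2*k + 1} \<times> {0, 1, 2}" "D = {2*l + 1} \<times> {0, 1, 2}"
    using assms unfolding odd_classes_def by blast
  then have "(2*k + 1, 0) \<in> C" "(2*l + 1, 0) \<in> D"
    "(2*k + 1, 0) \<otimes>\<^bsub>U6m m\<^esub> (2*l + 1, 0) = (2*l + 1, 0) \<otimes>\<^bsub>U6m m\<^esub> (2*k + 1, 0)"
    by (simp_all add: U6m_commute_iff)
  then show ?thesis
    unfolding nccc_adj_def by metis
qed

lemma not_nccc_adj_even_classes:
  assumes "C \<in> even_classes m" "D \<in> even_classes m"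
  shows "\<not> nccc_adj (U6m m) C D"
proof -
  obtain k l where "C = {2*k} \<times> {1, 2}" "D = {2*l} \<times> {1, 2}"
    using assms unfolding even_classes_def by blast
  then have "(2*k, 1) \<in> C" "(2*l, 1) \<in> D"
    "(2*k, 1) \<otimes>\<^bsub>U6m m\<^esub> (2*l, 1) = (2*l, 1) \<otimes>\<^bsub>U6m m\<^esub> (2*k, 1)"
    by (simp_all add: U6m_commute_iff)
  then show ?thesis
    unfolding nccc_adj_def by metis
qed

lemma nccc_adj_odd_even_classes:
  assumes "C \<in> odd_classes m" "D \<in> even_classes m"
  shows "nccc_adj (U6m m) C D"
proof -
  obtain k l where C: "C = {2*k + 1} \<times> {0, 1, 2}" and D: "D = {2*l} \<times> {1, 2}"
    using assms unfolding odd_classes_def even_classes_def by blast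
  have "C \<noteq> D"
    using assms odd_even_classes_disjoint by blast
  moreover have "x \<otimes>\<^bsub>U6m m\<^esub> y \<noteq> y \<otimes>\<^bsub>U6m m\<^esub> x" if "x \<in> C" "y \<in> D" for x y
    using that unfolding C D by (auto simp: U6m_commute_iff)
  ultimately show ?thesis
    by (simp add: nccc_adj_def)
qed

lemma nccc_adj_U6m:
  assumes "C \<in> odd_classes m \<union> even_classes m" "D \<in> odd_classes m \<union> even_classes m"
  shows "nccc_adj (U6m m) C D \<longleftrightarrow> (C \<in> odd_classes m \<longleftrightarrow> D \<notin> odd_classes m)"
proof -
  have "C \<in> even_classes m \<longleftrightarrow> C \<notin> odd_classes m" "D \<in> even_classes m \<longleftrightarrow> D \<notin> odd_classes m"
    using assms odd_even_classes_disjoint by blast+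
  then show ?thesis
    using not_nccc_adj_odd_classes[of C m D] not_nccc_adj_even_classes[of C m D]
      nccc_adj_odd_even_classes[of C m D] nccc_adj_odd_even_classes[of D m C] nccc_adj_sym[of "U6m m" C D]
    by argo
qed

theorem corollary2p8:
  fixes m :: nat
  assumes "m \<ge> 2"
  shows "Spec (nccc_vertices (U6m m)) (nccc_adj (U6m m))
           = replicate_mset (2*m - 2) 0 + {# of_nat m, - of_nat m #}
       \<and> L_Spec (nccc_vertices (U6m m)) (nccc_adj (U6m m))
           = {# 0 #} + replicate_mset (2*m - 2) (of_nat m) + {# 2 * of_nat m #}
       \<and> Q_Spec (nccc_vertices (U6m m)) (nccc_adj (U6m m))
           = L_Spec (nccc_vertices (U6m m)) (nccc_adj (U6m m))
       \<and> energy (nccc_vertices (U6m m)) (nccc_adj (U6m m)) = 2 * real m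
       \<and> laplacian_energy (nccc_vertices (U6m m)) (nccc_adj (U6m m)) = 2 * real m
       \<and> signless_laplacian_energy (nccc_vertices (U6m m)) (nccc_adj (U6m m)) = 2 * real m"
proof -
  have m: "m > 0" \<comment> \<open>the only use of the hypothesis m \<ge> 2\<close>
    using assms by simp
  have V: "nccc_vertices (U6m m) = odd_classes m \<union> even_classes m"
    using m by (rule nccc_vertices_U6m)
  interpret balanced_complete_bipartite "nccc_vertices (U6m m)" "odd_classes m" "nccc_adj (U6m m)" m
  proof
    show "finite (nccc_vertices (U6m m))" "odd_classes m \<subseteq> nccc_vertices (U6m m)"
      by (simp_all add: V odd_classes_def even_classes_def)
    have "nccc_vertices (U6m m) - odd_classes m = even_classes m"
      using V odd_even_classes_disjoint by blast
    then show "card (odd_classes m) = m" "card (nccc_vertices (U6m m) - odd_classes m) = m"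
      by (simp_all add: card_odd_classes card_even_classes)
  qed (use m V nccc_adj_U6m in simp_all)
  show ?thesis
    using Spec_eq L_Spec_eq Q_Spec_eq energy_eq laplacian_energy_eq signless_laplacian_energy_eq by blast
qed

end
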